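(* Let $\{(X_i,Y_i)\}_{i\ge 1}$ be a stationary ergodic sequence with values in $\mathbb{R}^d\times\mathbb{R}$ with $E|Y_1|<\infty$; let $(X,Y)$ have the common distribution of the $(X_i,Y_i)$, $\mu$ the distribution of $X$, and suppose the regression function $m(x)=E(Y\mid X=x)$ is Lipschitz continuous with Lipschitz constant $C$ (with respect to the Euclidean norm). Let $L\ge C\sqrt d$ and let $N_n$ be a non-decreasing sequence of positive integers with $N_n\to\infty$. Then, with $S$, $m_L$, $\hat m_{n,L}$ as in the context, $m_L(x)=m(x)$ for all $x\in S$, and consequently: (a) almost surely, for all $x\in S$, $\hat m_{n,L}(x)\to m(x)$; (b) if $S$ is bounded, then almost surely $\sup_{x\in S}|\hat m_{n,L}(x)-m(x)|\to 0$; (c) if either $|Y|\le D<\infty$ almost surely for some (not necessarily known) constant $D$, or $\mu$ has bounded support, then almost surely $\int(\hat m_{n,L}(x)-m(x))^2\mu(dx)\to 0$.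
   Context: For $k\ge 1$, $\mathcal{P}_k$ is a partition of $\mathbb{R}^d$ into cubes of volume $(2^{-k-2})^d$ (side length $2^{-k-2}$), with $\mathcal{P}_{k+1}$ refining $\mathcal{P}_k$; $A_k(x)$ is the cell of $\mathcal{P}_k$ containing $x$. $S=\{x\in\mathbb{R}^d: \mu(A_k(x))>0 \text{ for all } k\ge1\}$. For $x\in S$: $M_k(x)=E(Y\mid X\in A_k(x))$; for $k\ge2$, $\Delta_{k,L}(x)=\mathrm{sign}(M_k(x)-M_{k-1}(x))\min(|M_k(x)-M_{k-1}(x)|,L2^{-k})$; $m_L(x)=M_1(x)+\sum_{k=2}^\infty\Delta_{k,L}(x)$. Estimator: $\hat M_{k,n}(x)=\frac{\sum_{j=1}^n Y_j1_{\{X_j\in A_k(x)\}}}{\sum_{j=1}^n1_{\{X_j\in A_k(x)\}}}$ (set to $0$ if the denominator is $0$); for $k\ge2$, $\hat\Delta_{k,n,L}(x)=\mathrm{sign}(\hat M_{k,n}(x)-\hat M_{k-1,n}(x))\min(|\hat M_{k,n}(x)-\hat M_{k-1,n}(x)|,L2^{-k})$; $\hat m_{n,L}(x)=\hat M_{1,n}(x)+\sum_{k=2}^{N_n}\hat\Delta_{k,n,L}(x)$. *)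

theory Defs
  imports "HOL-Probability.Probability"
begin

text \<open>Dyadic partition: the cell of P_k containing x is the half-open grid cube of
side 2^(-k-2) containing x.\<close>
definition cell :: "nat \<Rightarrow> real^'d \<Rightarrow> (real^'d) set" where
  "cell k x = {y. \<forall>i. \<lfloor>2^(k+2) * (y $ i)\<rfloor> = \<lfloor>2^(k+2) * (x $ i)\<rfloor>}"

definition clip :: "real \<Rightarrow> nat \<Rightarrow> real \<Rightarrow> real" where
  "clip L k t = sgn t * min \<bar>t\<bar> (L / 2^k)"

definition cell_mean :: "'a measure \<Rightarrow> ('a \<Rightarrow> real^'d) \<Rightarrow> ('a \<Rightarrow> real) \<Rightarrow> nat \<Rightarrow> real^'d \<Rightarrow> real" where
  "cell_mean M X Y k x =
     (\<integral>\<omega>. indicator (cell k x) (X \<omega>) * Y \<omega> \<partial>M) / measure M {\<omega>\<in>space M. X \<omega> \<in> cell k x}"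

definition pos_set :: "'a measure \<Rightarrow> ('a \<Rightarrow> real^'d) \<Rightarrow> (real^'d) set" where
  "pos_set M X = {x. \<forall>k\<ge>1. measure M {\<omega>\<in>space M. X \<omega> \<in> cell k x} > 0}"

definition m_L :: "'a measure \<Rightarrow> ('a \<Rightarrow> real^'d) \<Rightarrow> ('a \<Rightarrow> real) \<Rightarrow> real \<Rightarrow> real^'d \<Rightarrow> real" where
  "m_L M X Y L x = cell_mean M X Y 1 x +
     (\<Sum>k. clip L (k+2) (cell_mean M X Y (k+2) x - cell_mean M X Y (k+1) x))"

text \<open>Empirical cell mean from the first n samples (sample j+1 is (X j, Y j));
  division by zero yields 0, matching the convention of the paper.\<close>
definition emp_mean :: "(nat \<Rightarrow> 'a \<Rightarrow> real^'d) \<Rightarrow> (nat \<Rightarrow> 'a \<Rightarrow> real) \<Rightarrow> nat \<Rightarrow> nat \<Rightarrow> 'a \<Rightarrow> real^'d \<Rightarrow> real" where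
  "emp_mean X Y k n \<omega> x =
     (\<Sum>j<n. Y j \<omega> * indicator (cell k x) (X j \<omega>)) / (\<Sum>j<n. indicator (cell k x) (X j \<omega>))"

definition m_hat :: "(nat \<Rightarrow> 'a \<Rightarrow> real^'d) \<Rightarrow> (nat \<Rightarrow> 'a \<Rightarrow> real) \<Rightarrow> real \<Rightarrow> nat \<Rightarrow> nat \<Rightarrow> 'a \<Rightarrow> real^'d \<Rightarrow> real" where
  "m_hat X Y L N n \<omega> x = emp_mean X Y 1 n \<omega> x +
     (\<Sum>k\<in>{2..N}. clip L k (emp_mean X Y k n \<omega> x - emp_mean X Y (k-1) n \<omega> x))"

definition proc_law :: "'a measure \<Rightarrow> (nat \<Rightarrow> 'a \<Rightarrow> 'b::topological_space) \<Rightarrow> (nat \<Rightarrow> 'b) measure" where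
  "proc_law M Z = distr M (PiM UNIV (\<lambda>_. borel)) (\<lambda>\<omega> i. Z i \<omega>)"

definition seq_shift :: "(nat \<Rightarrow> 'b) \<Rightarrow> (nat \<Rightarrow> 'b)" where
  "seq_shift f = (\<lambda>i. f (Suc i))"

definition stationary_process :: "'a measure \<Rightarrow> (nat \<Rightarrow> 'a \<Rightarrow> 'b::topological_space) \<Rightarrow> bool" where
  "stationary_process M Z \<longleftrightarrow> (\<forall>i. Z i \<in> borel_measurable M) \<and>
     distr (proc_law M Z) (PiM UNIV (\<lambda>_. borel)) seq_shift = proc_law M Z"

definition ergodic_process :: "'a measure \<Rightarrow> (nat \<Rightarrow> 'a \<Rightarrow> 'b::topological_space) \<Rightarrow> bool" where
  "ergodic_process M Z \<longleftrightarrow>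
     (\<forall>A \<in> sets (PiM UNIV (\<lambda>_. borel :: 'b measure)). seq_shift -` A = A \<longrightarrow>
        measure (proc_law M Z) A = 0 \<or> measure (proc_law M Z) A = 1)"

end

theory Submission
  imports Defs
begin

text \<open>On every cell \<open>A\<close> of positive mass, the empirical mean of the \<open>Y\<^sub>j\<close> with \<open>X\<^sub>j \<in> A\<close> is a
  ratio of two ergodic averages and therefore converges almost surely to the cell mean
  \<open>E(Y | X \<in> A)\<close>; as there are only countably many dyadic cells this holds simultaneously for all
  of them.  By the tower property the cell mean is the \<open>\<mu>\<close>-average of the regression function over
  the cell, so Lipschitz continuity puts it within \<open>C \<surd>d 2\<^sup>-\<^sup>k\<^sup>-\<^sup>2\<close> of \<open>m(x)\<close> at level \<open>k\<close>.
  Consequently consecutive cell means differ by less than \<open>L 2\<^sup>-\<^sup>k\<close>, the truncation in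
  \<open>m\<^sub>L\<close> is inactive and the series telescopes to \<open>m(x)\<close>.  The estimator is the same series with
  empirical cell means; as the truncated increments are bounded by the summable sequence
  \<open>L 2\<^sup>-\<^sup>k\<close>, a Tannery argument passes to the limit term by term, uniformly on any set on which the
  empirical cell means converge uniformly, for instance on a bounded \<open>S\<close>, which meets only
  finitely many cells of each level.  The \<open>L\<^sub>2(\<mu>)\<close> statements follow since \<open>\<mu>(S) = 1\<close>, by uniform
  convergence for bounded support and by dominated convergence for bounded \<open>Y\<close>.\<close>

section \<open>Birkhoff's ergodic theorem\<close>

definition birkhoff_sum :: "('b \<Rightarrow> 'b) \<Rightarrow> ('b \<Rightarrow> real) \<Rightarrow> nat \<Rightarrow> 'b \<Rightarrow> real" where
  "birkhoff_sum T g n z = (\<Sum>j<n. g ((T^^j) z))"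

fun birkhoff_max :: "('b \<Rightarrow> 'b) \<Rightarrow> ('b \<Rightarrow> real) \<Rightarrow> nat \<Rightarrow> 'b \<Rightarrow> real" where
  "birkhoff_max T g 0 z = 0"
| "birkhoff_max T g (Suc n) z = max (birkhoff_max T g n z) (birkhoff_sum T g (Suc n) z)"

lemma birkhoff_sum_0 [simp]: "birkhoff_sum T g 0 z = 0"
  by (simp add: birkhoff_sum_def)

lemma birkhoff_sum_Suc_shift: "birkhoff_sum T g (Suc n) z = g z + birkhoff_sum T g n (T z)"
  unfolding birkhoff_sum_def
  by (subst sum.lessThan_Suc_shift) (simp add: funpow_Suc_right del: funpow.simps)

lemma birkhoff_sum_diff_const: "birkhoff_sum T (\<lambda>z. f z - b) n z = birkhoff_sum T f n z - real n * b"
  by (simp add: birkhoff_sum_def sum_subtractf)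

lemma birkhoff_sum_uminus: "birkhoff_sum T (\<lambda>z. - f z) n z = - birkhoff_sum T f n z"
  by (simp add: birkhoff_sum_def sum_negf)

lemma birkhoff_max_nonneg: "0 \<le> birkhoff_max T g n z"
  by (induction n) auto

lemma birkhoff_sum_le_max: "k \<le> n \<Longrightarrow> birkhoff_sum T g k z \<le> birkhoff_max T g n z"
proof (induction n)
  case (Suc n)
  then show ?case
    by (cases "k = Suc n") (simp_all add: max.coboundedI1)
qed simp

lemma birkhoff_max_attained: "\<exists>k\<le>n. birkhoff_max T g n z = birkhoff_sum T g k z"
proof (induction n)
  case (Suc n)
  then obtain k where k: "k \<le> n" "birkhoff_max T g n z = birkhoff_sum T g k z"
    by blast
  then show ?case
  proof (cases "birkhoff_max T g n z \<le> birkhoff_sum T g (Suc n) z")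
    case True
    then show ?thesis
      by (intro exI[of _ "Suc n"]) (simp add: max_def)
  next
    case False
    with k show ?thesis
      by (intro exI[of _ k]) (simp add: max_def)
  qed
qed simp

lemma birkhoff_max_pos_iff: "0 < birkhoff_max T g n z \<longleftrightarrow> (\<exists>k\<le>n. 0 < birkhoff_sum T g k z)"
proof
  show "0 < birkhoff_max T g n z \<Longrightarrow> \<exists>k\<le>n. 0 < birkhoff_sum T g k z"
    using birkhoff_max_attained[of n T g z] by auto
  show "\<exists>k\<le>n. 0 < birkhoff_sum T g k z \<Longrightarrow> 0 < birkhoff_max T g n z"
    using birkhoff_sum_le_max[of _ n T g z] by force
qed

text \<open>A positive maximum is attained at some \<open>k \<ge> 1\<close>; split off the first summand.\<close>
lemma birkhoff_max_le_shift:
  assumes "0 < birkhoff_max T g n z"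
  shows "birkhoff_max T g n z \<le> g z + birkhoff_max T g n (T z)"
proof -
  obtain k where k: "k \<le> n" "birkhoff_max T g n z = birkhoff_sum T g k z"
    using birkhoff_max_attained[of n T g z] by blast
  have "k \<noteq> 0"
    using assms k(2) by (metis birkhoff_sum_0 less_irrefl)
  then obtain k' where k': "k = Suc k'"
    using not0_implies_Suc by blast
  have "birkhoff_max T g n z = g z + birkhoff_sum T g k' (T z)"
    unfolding k(2) k' by (rule birkhoff_sum_Suc_shift)
  also have "\<dots> \<le> g z + birkhoff_max T g n (T z)"
    using k(1) k' by (intro add_left_mono birkhoff_sum_le_max) simp
  finally show ?thesis .
qed

lemma unbounded_birkhoff_sum_shift_iff:
  "(\<forall>B::real. \<exists>n. B < birkhoff_sum T g n (T z)) \<longleftrightarrow> (\<forall>B::real. \<exists>n. B < birkhoff_sum T g n z)"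
proof
  assume shifted: "\<forall>B. \<exists>n. B < birkhoff_sum T g n (T z)"
  show "\<forall>B. \<exists>n. B < birkhoff_sum T g n z"
  proof
    fix B
    obtain n where "B - g z < birkhoff_sum T g n (T z)"
      using shifted by blast
    then have "B < birkhoff_sum T g (Suc n) z"
      by (simp add: birkhoff_sum_Suc_shift)
    then show "\<exists>n. B < birkhoff_sum T g n z" ..
  qed
next
  assume unshifted: "\<forall>B. \<exists>n. B < birkhoff_sum T g n z"
  show "\<forall>B. \<exists>n. B < birkhoff_sum T g n (T z)"
  proof
    fix B
    obtain n where n: "max B 0 + \<bar>g z\<bar> < birkhoff_sum T g n z"
      using unshifted by blast
    then obtain n' where "n = Suc n'"
      by (cases n) auto
    with n have "B < birkhoff_sum T g n' (T z)"
      by (simp add: birkhoff_sum_Suc_shift)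
    then show "\<exists>n. B < birkhoff_sum T g n (T z)" ..
  qed
qed

lemma all_nat_less_iff_all_real_less:
  "(\<forall>B::nat. \<exists>n. real B < f n) \<longleftrightarrow> (\<forall>B::real. \<exists>n. B < f n)"
proof
  assume nat_bounds: "\<forall>B::nat. \<exists>n. real B < f n"
  show "\<forall>B::real. \<exists>n. B < f n"
  proof
    fix B :: real
    obtain k :: nat where "B < real k"
      using reals_Archimedean2 by blast
    with nat_bounds show "\<exists>n. B < f n"
      by (meson order_less_trans)
  qed
qed simp

locale mpt = prob_space P for P :: "'b measure" +
  fixes T :: "'b \<Rightarrow> 'b"
  assumes measurable_T [measurable]: "T \<in> measurable P P"
    and distr_T: "distr P P T = P"
begin

lemma measurable_funpow [measurable]: "T^^j \<in> measurable P P"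
proof (induction j)
  case (Suc j)
  show ?case
    unfolding funpow_Suc_right comp_def by (rule measurable_compose[OF measurable_T Suc])
qed simp

lemma distr_funpow: "distr P P (T^^j) = P"
proof (induction j)
  case (Suc j)
  have "distr P P (T^^Suc j) = distr (distr P P T) P (T^^j)"
    by (simp add: funpow_Suc_right distr_distr del: funpow.simps)
  also have "\<dots> = P"
    using Suc by (simp add: distr_T)
  finally show ?case .
qed (simp add: distr_id2)

lemma integrable_comp_funpow:
  fixes g :: "'b \<Rightarrow> real"
  assumes "integrable P g"
  shows "integrable P (\<lambda>z. g ((T^^j) z))"
  using assms integrable_distr_eq[OF measurable_funpow, of g j] by (simp add: distr_funpow)

lemma integral_comp_funpow:
  fixes g :: "'b \<Rightarrow> real"
  assumes "integrable P g"
  shows "(\<integral>z. g ((T^^j) z) \<partial>P) = (\<integral>z. g z \<partial>P)"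
  using assms integral_distr[OF measurable_funpow, of g j] by (simp add: distr_funpow)

lemma measurable_birkhoff_sum [measurable]:
  "g \<in> borel_measurable P \<Longrightarrow> birkhoff_sum T g n \<in> borel_measurable P"
  unfolding birkhoff_sum_def by (intro borel_measurable_sum measurable_compose[OF measurable_funpow])

lemma integrable_birkhoff_sum: "integrable P g \<Longrightarrow> integrable P (birkhoff_sum T g n)"
  unfolding birkhoff_sum_def by (intro Bochner_Integration.integrable_sum integrable_comp_funpow)

lemma birkhoff_max_fun_simps:
  "birkhoff_max T g 0 = (\<lambda>_. 0)"
  "birkhoff_max T g (Suc n) = (\<lambda>z. max (birkhoff_max T g n z) (birkhoff_sum T g (Suc n) z))"
  by auto

lemma measurable_birkhoff_max [measurable]:
  "g \<in> borel_measurable P \<Longrightarrow> birkhoff_max T g n \<in> borel_measurable P"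
  by (induction n) (simp_all add: birkhoff_max_fun_simps)

lemma integrable_birkhoff_max: "integrable P g \<Longrightarrow> integrable P (birkhoff_max T g n)"
  by (induction n) (simp_all add: birkhoff_max_fun_simps integrable_birkhoff_sum)

text \<open>Garsia's argument: \<open>birkhoff_max T g n - birkhoff_max T g n \<circ> T\<close> has integral zero by
  invariance and is dominated by \<open>g\<close> on the set where the maximum is positive.\<close>
lemma maximal_ergodic_lemma_finite:
  assumes g: "integrable P g"
  shows "0 \<le> (\<integral>z. indicator {z\<in>space P. 0 < birkhoff_max T g n z} z * g z \<partial>P)"
proof -
  have [measurable]: "g \<in> borel_measurable P"
    using g by auto
  let ?M = "birkhoff_max T g n"
  have int_M: "integrable P ?M" and int_MT: "integrable P (\<lambda>z. ?M (T z))"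
    using integrable_comp_funpow[OF integrable_birkhoff_max[OF g], where j=1] integrable_birkhoff_max[OF g]
    by simp_all
  have "0 = (\<integral>z. ?M z \<partial>P) - (\<integral>z. ?M (T z) \<partial>P)"
    using integral_comp_funpow[OF integrable_birkhoff_max[OF g], where j=1] by simp
  also have "\<dots> = (\<integral>z. ?M z - ?M (T z) \<partial>P)"
    using int_M int_MT by simp
  also have "\<dots> \<le> (\<integral>z. indicator {z\<in>space P. 0 < ?M z} z * g z \<partial>P)"
  proof (rule integral_mono)
    show "integrable P (\<lambda>z. indicator {z\<in>space P. 0 < ?M z} z * g z)"
      using integrable_real_mult_indicator[OF _ g] by (simp add: mult.commute)
    fix z assume "z \<in> space P"
    then show "?M z - ?M (T z) \<le> indicator {z\<in>space P. 0 < ?M z} z * g z"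
      using birkhoff_max_le_shift[of T g n z] birkhoff_max_nonneg[of T g n z]
        birkhoff_max_nonneg[of T g n "T z"]
      by (cases "0 < ?M z") auto
  qed (use int_M int_MT in simp)
  finally show ?thesis .
qed

lemma maximal_ergodic_lemma:
  assumes g: "integrable P g"
  shows "0 \<le> (\<integral>z. indicator {z\<in>space P. \<exists>n. 0 < birkhoff_sum T g n z} z * g z \<partial>P)"
proof -
  have [measurable]: "g \<in> borel_measurable P"
    using g by auto
  let ?G = "{z\<in>space P. \<exists>n. 0 < birkhoff_sum T g n z}"
  let ?G_n = "\<lambda>n. {z\<in>space P. 0 < birkhoff_max T g n z}"
  have "(\<lambda>n. \<integral>z. indicator (?G_n n) z * g z \<partial>P) \<longlonglongrightarrow> (\<integral>z. indicator ?G z * g z \<partial>P)"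
  proof (rule integral_dominated_convergence[where w="\<lambda>z. norm (g z)"])
    show "AE z in P. (\<lambda>n. indicator (?G_n n) z * g z) \<longlonglongrightarrow> indicator ?G z * g z"
    proof (rule AE_I2)
      fix z assume z: "z \<in> space P"
      have "eventually (\<lambda>n. z \<in> ?G_n n \<longleftrightarrow> z \<in> ?G) sequentially"
      proof (cases "z \<in> ?G")
        case True
        then obtain n0 where "0 < birkhoff_sum T g n0 z"
          by auto
        then have "eventually (\<lambda>n. z \<in> ?G_n n) sequentially"
          using z by (intro eventually_mono[OF eventually_ge_at_top[of n0]]) (auto simp: birkhoff_max_pos_iff)
        then show ?thesis
          using True by (auto elim: eventually_mono)
      qed (auto simp: birkhoff_max_pos_iff)
      then show "(\<lambda>n. indicator (?G_n n) z * g z) \<longlonglongrightarrow> indicator ?G z * g z"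
        by (rule tendsto_eventually[OF eventually_mono]) (simp add: indicator_def)
    qed
  qed (use g in \<open>auto simp: indicator_def abs_mult\<close>)
  then show ?thesis
    by (rule LIMSEQ_le_const) (auto intro: maximal_ergodic_lemma_finite[OF g])
qed

end

locale ergodic_mpt = mpt +
  assumes ergodic: "\<forall>A\<in>sets P. T -` A \<inter> space P = A \<longrightarrow> prob A = 0 \<or> prob A = 1"
begin

text \<open>The set where the Birkhoff sums are unbounded is invariant, so it has probability 0 or 1.
  Probability 1 would make the integral in the maximal ergodic lemma equal to \<open>expectation g < 0\<close>.\<close>
lemma AE_bdd_birkhoff_sum:
  assumes g: "integrable P g" and neg: "expectation g < 0"
  shows "AE z in P. \<exists>B. \<forall>n. birkhoff_sum T g n z \<le> B"
proof -
  have [measurable]: "g \<in> borel_measurable P"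
    using g by auto
  define F where "F = {z\<in>space P. \<forall>B::nat. \<exists>n. real B < birkhoff_sum T g n z}"
  have F_sets [measurable]: "F \<in> sets P"
    unfolding F_def by measurable
  have "T -` F \<inter> space P = F"
    using measurable_space[OF measurable_T]
    by (auto simp: F_def all_nat_less_iff_all_real_less unbounded_birkhoff_sum_shift_iff)
  then have "prob F = 0 \<or> prob F = 1"
    using ergodic F_sets by blast
  moreover have "prob F \<noteq> 1"
  proof
    assume "prob F = 1"
    then have "AE z in P. z \<in> F"
      using F_sets prob_eq_1 by blast
    then have "AE z in P. indicator {z\<in>space P. \<exists>n. 0 < birkhoff_sum T g n z} z * g z = g z"
    proof eventually_elim
      case (elim z)
      then obtain n where "real 0 < birkhoff_sum T g n z"
        unfolding F_def by blast
      with elim show ?case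
        by (auto simp: F_def indicator_def)
    qed
    then have "(\<integral>z. indicator {z\<in>space P. \<exists>n. 0 < birkhoff_sum T g n z} z * g z \<partial>P) = expectation g"
      by (intro integral_cong_AE) auto
    then show False
      using maximal_ergodic_lemma[OF g] neg by simp
  qed
  ultimately have "AE z in P. z \<notin> F"
    using F_sets by (intro AE_not_in) (simp add: emeasure_eq_measure null_sets_def)
  then show ?thesis
    using AE_space by eventually_elim (auto simp: F_def not_less)
qed

lemma birkhoff_average_eventually_less:
  fixes f :: "_ \<Rightarrow> real"
  assumes f: "integrable P f" and a: "expectation f < a"
  shows "AE z in P. eventually (\<lambda>n. birkhoff_sum T f n z / real n < a) sequentially"
proof -
  define b where "b = (a + expectation f) / 2"
  have "expectation (\<lambda>z. f z - b) < 0"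
    using f a by (simp add: prob_space b_def)
  with f have "AE z in P. \<exists>B. \<forall>n. birkhoff_sum T (\<lambda>z. f z - b) n z \<le> B"
    by (intro AE_bdd_birkhoff_sum) simp_all
  then show ?thesis
    unfolding birkhoff_sum_diff_const
  proof eventually_elim
    case (elim z)
    then obtain B where B: "\<And>n. birkhoff_sum T f n z \<le> B + real n * b"
      by (auto simp: algebra_simps)
    obtain n0 :: nat where n0: "B / (a - b) < real n0"
      using reals_Archimedean2 by blast
    have "b < a"
      using a by (simp add: b_def)
    show ?case
    proof (rule eventually_mono[OF eventually_gt_at_top[of n0]])
      fix n assume "n0 < n"
      then have "B / (a - b) < real n"
        using n0 by linarith
      then have "B < real n * (a - b)"
        using \<open>b < a\<close> by (simp add: pos_divide_less_eq)
      then show "birkhoff_sum T f n z / real n < a"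
        using B[of n] \<open>n0 < n\<close> by (simp add: divide_less_eq algebra_simps)
    qed
  qed
qed

theorem birkhoff_theorem:
  fixes f :: "_ \<Rightarrow> real"
  assumes f: "integrable P f"
  shows "AE z in P. (\<lambda>n. birkhoff_sum T f n z / real n) \<longlonglongrightarrow> expectation f"
proof -
  have "AE z in P. \<forall>k::nat. eventually (\<lambda>n. birkhoff_sum T f n z / real n < expectation f + 1 / Suc k) sequentially
      \<and> eventually (\<lambda>n. birkhoff_sum T (\<lambda>z. - f z) n z / real n < - expectation f + 1 / Suc k) sequentially"
    unfolding AE_all_countable AE_conj_iff
    using birkhoff_average_eventually_less[of f] birkhoff_average_eventually_less[of "\<lambda>z. - f z"] f
    by simp
  then show ?thesis
  proof eventually_elim
    case (elim z)
    show ?case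
    proof (rule tendstoI)
      fix e :: real assume "0 < e"
      then obtain k where k: "1 / Suc k < e"
        using reals_Archimedean by (auto simp: inverse_eq_divide)
      have "eventually (\<lambda>n. birkhoff_sum T f n z / real n < expectation f + 1 / Suc k
          \<and> - (birkhoff_sum T f n z / real n) < - expectation f + 1 / Suc k) sequentially"
        using elim[rule_format, of k] by (intro eventually_conj) (simp_all add: birkhoff_sum_uminus)
      then show "eventually (\<lambda>n. dist (birkhoff_sum T f n z / real n) (expectation f) < e) sequentially"
        by eventually_elim (use k in \<open>auto simp: dist_real_def abs_less_iff\<close>)
    qed
  qed
qed

end

section \<open>Stationary ergodic processes\<close>

lemma funpow_seq_shift: "(seq_shift ^^ j) z = (\<lambda>i. z (i + j))"
  by (induction j arbitrary: z) (simp_all add: funpow_Suc_right seq_shift_def del: funpow.simps)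

lemma measurable_seq_shift: "seq_shift \<in> measurable (PiM UNIV (\<lambda>_. B)) (PiM UNIV (\<lambda>_. B))"
  unfolding seq_shift_def by (rule measurable_PiM_single') (auto simp: space_PiM)

lemma measurable_process:
  assumes "\<And>i. Z i \<in> borel_measurable M"
  shows "(\<lambda>\<omega> i. Z i \<omega>) \<in> measurable M (PiM UNIV (\<lambda>_. borel))"
  by (rule measurable_PiM_single') (auto simp: space_PiM assms)

lemma sets_proc_law: "sets (proc_law M Z) = sets (PiM UNIV (\<lambda>_. borel))"
  by (simp add: proc_law_def)

lemma mpt_proc_law:
  assumes "prob_space M" and stationary: "stationary_process M Z"
  shows "mpt (proc_law M Z) seq_shift"
proof (intro mpt.intro mpt_axioms.intro)
  have Z: "(\<lambda>\<omega> i. Z i \<omega>) \<in> measurable M (PiM UNIV (\<lambda>_. borel))"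
    using stationary by (intro measurable_process) (simp add: stationary_process_def)
  show "prob_space (proc_law M Z)"
    unfolding proc_law_def by (rule prob_space.prob_space_distr[OF assms(1) Z])
  show "seq_shift \<in> measurable (proc_law M Z) (proc_law M Z)"
    using measurable_seq_shift by (simp add: measurable_cong_sets[OF sets_proc_law sets_proc_law])
  have "distr (proc_law M Z) (proc_law M Z) seq_shift = distr (proc_law M Z) (PiM UNIV (\<lambda>_. borel)) seq_shift"
    by (rule distr_cong) (simp_all add: sets_proc_law)
  then show "distr (proc_law M Z) (proc_law M Z) seq_shift = proc_law M Z"
    using stationary by (simp add: stationary_process_def)
qed

lemma ergodic_mpt_proc_law:
  assumes "prob_space M" "stationary_process M Z" and "ergodic_process M Z"
  shows "ergodic_mpt (proc_law M Z) seq_shift"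
proof (rule ergodic_mpt.intro)
  show "mpt (proc_law M Z) seq_shift"
    using assms(1,2) by (rule mpt_proc_law)
  have "space (proc_law M Z) = UNIV"
    by (simp add: proc_law_def space_PiM)
  then show "ergodic_mpt_axioms (proc_law M Z) seq_shift"
    using assms(3) by (simp add: ergodic_mpt_axioms_def ergodic_process_def sets_proc_law)
qed

theorem ergodic_process_averages_tendsto:
  fixes Z :: "nat \<Rightarrow> 'a \<Rightarrow> 'b::topological_space" and h :: "'b \<Rightarrow> real"
  assumes M: "prob_space M" and stationary: "stationary_process M Z" and "ergodic_process M Z"
    and h: "h \<in> borel_measurable borel" and "integrable M (\<lambda>\<omega>. h (Z 0 \<omega>))"
  shows "AE \<omega> in M. (\<lambda>n. (\<Sum>j<n. h (Z j \<omega>)) / real n) \<longlonglongrightarrow> (\<integral>\<omega>. h (Z 0 \<omega>) \<partial>M)"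
proof -
  interpret ergodic_mpt "proc_law M Z" seq_shift
    using assms(1-3) by (rule ergodic_mpt_proc_law)
  have Z: "(\<lambda>\<omega> i. Z i \<omega>) \<in> measurable M (PiM UNIV (\<lambda>_. borel))"
    using stationary by (intro measurable_process) (simp add: stationary_process_def)
  have h0: "(\<lambda>z. h (z 0)) \<in> borel_measurable (PiM UNIV (\<lambda>_. borel))"
    using h by measurable
  have "integrable (proc_law M Z) (\<lambda>z. h (z 0))"
    unfolding proc_law_def using integrable_distr_eq[OF Z h0] assms(5) by simp
  then have "AE z in proc_law M Z. (\<lambda>n. (\<Sum>j<n. h (z j)) / real n) \<longlonglongrightarrow> (\<integral>z. h (z 0) \<partial>proc_law M Z)"
    using birkhoff_theorem[of "\<lambda>z. h (z 0)"] by (simp add: birkhoff_sum_def funpow_seq_shift)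
  then show ?thesis
    unfolding proc_law_def integral_distr[OF Z h0] by (rule AE_distrD[OF Z])
qed

lemma stationary_process_AE_component:
  fixes Z :: "nat \<Rightarrow> 'a \<Rightarrow> 'b::topological_space"
  assumes M: "prob_space M" and stationary: "stationary_process M Z"
    and Q: "{x. Q x} \<in> sets borel" and "AE \<omega> in M. Q (Z 0 \<omega>)"
  shows "AE \<omega> in M. Q (Z j \<omega>)"
proof -
  interpret mpt "proc_law M Z" seq_shift
    using M stationary by (rule mpt_proc_law)
  have Z: "(\<lambda>\<omega> i. Z i \<omega>) \<in> measurable M (PiM UNIV (\<lambda>_. borel))"
    using stationary by (intro measurable_process) (simp add: stationary_process_def)
  have [measurable]: "Measurable.pred borel Q"
    using Q by (simp add: pred_def)
  have "{z \<in> space (PiM UNIV (\<lambda>_. borel)). Q (z 0)} \<in> sets (PiM UNIV (\<lambda>_. borel :: 'b measure))"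
    by measurable
  then have "AE z in proc_law M Z. Q (z 0)"
    unfolding proc_law_def using AE_distr_iff[OF Z] assms(4) by simp
  then have "AE z in distr (proc_law M Z) (proc_law M Z) (seq_shift ^^ j). Q (z 0)"
    by (simp only: distr_funpow)
  then have "AE z in proc_law M Z. Q (z j)"
    using AE_distrD[OF measurable_funpow] by (fastforce simp: funpow_seq_shift)
  then show ?thesis
    unfolding proc_law_def by (rule AE_distrD[OF Z])
qed

section \<open>Dyadic cells and cell means\<close>

definition cell_index :: "nat \<Rightarrow> real^'d \<Rightarrow> ('d \<Rightarrow> int)" where
  "cell_index k x = (\<lambda>i. \<lfloor>2^(k+2) * (x $ i)\<rfloor>)"

lemma cell_eq_index: "cell k x = {y. cell_index k y = cell_index k x}"
  unfolding cell_def cell_index_def by (auto simp: fun_eq_iff)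

lemma mem_cell_commute: "y \<in> cell k x \<longleftrightarrow> x \<in> cell k y"
  unfolding cell_eq_index by auto

lemma mem_cell_self: "x \<in> cell k x"
  unfolding cell_eq_index by auto

lemma cell_in_borel [measurable]: "cell k x \<in> sets borel"
  unfolding cell_def by measurable

lemma abs_diff_less_one_if_floor_eq:
  assumes "\<lfloor>a::real\<rfloor> = \<lfloor>b\<rfloor>"
  shows "\<bar>a - b\<bar> < 1"
proof -
  have "of_int \<lfloor>a\<rfloor> \<le> a" "a < of_int \<lfloor>a\<rfloor> + 1" "of_int \<lfloor>b\<rfloor> \<le> b" "b < of_int \<lfloor>b\<rfloor> + 1"
    by linarith+
  moreover have "real_of_int \<lfloor>a\<rfloor> = real_of_int \<lfloor>b\<rfloor>"
    using assms by simp
  ultimately show ?thesis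
    unfolding abs_less_iff by linarith
qed

lemma norm_le_sqrt_card_if_components_le:
  fixes v :: "real^'d"
  assumes "\<And>i. \<bar>v $ i\<bar> \<le> s"
  shows "norm v \<le> sqrt (real CARD('d)) * s"
proof -
  have "0 \<le> s"
    using assms[of undefined] by linarith
  have "norm v = L2_set (\<lambda>i. \<bar>v $ i\<bar>) UNIV"
    unfolding norm_vec_def by simp
  also have "\<dots> \<le> L2_set (\<lambda>i::'d. s) UNIV"
    by (rule L2_set_mono) (auto intro: assms)
  also have "\<dots> = sqrt (real CARD('d)) * s"
    using \<open>0 \<le> s\<close> by (simp add: L2_set_def real_sqrt_mult)
  finally show ?thesis .
qed

lemma dist_le_if_mem_cell:
  fixes x y :: "real^'d"
  assumes "y \<in> cell k x"
  shows "dist y x \<le> sqrt (real CARD('d)) / 2^(k+2)"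
proof -
  have "\<bar>(y - x) $ i\<bar> \<le> 1 / 2^(k+2)" for i
  proof -
    have "\<bar>2^(k+2) * (y $ i) - 2^(k+2) * (x $ i)\<bar> < 1"
      using assms by (intro abs_diff_less_one_if_floor_eq) (simp add: cell_def)
    then have "(2::real)^(k+2) * \<bar>y $ i - x $ i\<bar> < 1"
      by (simp add: abs_mult right_diff_distrib[symmetric])
    then show ?thesis
      by (simp add: field_simps)
  qed
  then show ?thesis
    using norm_le_sqrt_card_if_components_le[of "y - x" "1 / 2^(k+2)"] by (simp add: dist_norm)
qed

lemma finite_cell_index_image:
  fixes U :: "(real^'d) set"
  assumes "bounded U"
  shows "finite (cell_index k ` U)"
proof -
  obtain R where R: "\<And>x. x \<in> U \<Longrightarrow> norm x \<le> R"
    using assms unfolding bounded_iff by blast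
  define B :: int where "B = \<lceil>2^(k+2) * R\<rceil>"
  have "cell_index k ` U \<subseteq> Pi UNIV (\<lambda>_. {-B..B})"
  proof clarify
    fix x i assume "x \<in> U"
    then have "\<bar>x $ i\<bar> \<le> R"
      using R component_le_norm_cart order_trans by blast
    then have t: "\<bar>2^(k+2) * (x $ i)\<bar> \<le> 2^(k+2) * R"
      by (simp add: abs_mult)
    have "\<lfloor>2^(k+2) * (x $ i)\<rfloor> \<le> \<lfloor>2^(k+2) * R\<rfloor>"
      using abs_le_D1[OF t] by (rule floor_mono)
    moreover have "\<lfloor>- (2^(k+2) * R)\<rfloor> \<le> \<lfloor>2^(k+2) * (x $ i)\<rfloor>"
      using abs_le_D2[OF t] by (intro floor_mono) linarith
    moreover have "\<lfloor>- (2^(k+2) * R)\<rfloor> = - \<lceil>2^(k+2) * R\<rceil>"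
      by (rule floor_minus)
    moreover have "\<lfloor>2^(k+2) * R\<rfloor> \<le> \<lceil>2^(k+2) * R\<rceil>"
      by (rule floor_le_ceiling)
    ultimately show "cell_index k x i \<in> {-B..B}"
      unfolding cell_index_def B_def atLeastAtMost_iff by linarith
  qed
  moreover have "finite (PiE (UNIV::'d set) (\<lambda>_. {-B..B}))"
    by (rule finite_PiE) auto
  then have "finite (Pi (UNIV::'d set) (\<lambda>_. {-B..B}))"
    by (simp add: PiE_UNIV_domain)
  ultimately show ?thesis
    by (rule finite_subset)
qed

text \<open>There are only countably many cells.\<close>
lemma AE_all_cells:
  fixes P :: "nat \<Rightarrow> (real^'d) set \<Rightarrow> bool"
  assumes "\<And>k x. P k (cell k x) \<Longrightarrow> AE \<omega> in M. Q k (cell k x) \<omega>"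
  shows "AE \<omega> in M. \<forall>k x. P k (cell k x) \<longrightarrow> Q k (cell k x) \<omega>"
proof -
  have "AE \<omega> in M. \<forall>k (c::'d \<Rightarrow> int) (x::real^'d). cell_index k x = c \<longrightarrow>
      P k (cell k x) \<longrightarrow> Q k (cell k x) \<omega>"
    unfolding AE_all_countable
  proof (intro allI)
    fix k and c :: "'d \<Rightarrow> int"
    show "AE \<omega> in M. \<forall>x::real^'d. cell_index k x = c \<longrightarrow> P k (cell k x) \<longrightarrow> Q k (cell k x) \<omega>"
    proof (cases "\<exists>x0. cell_index k x0 = c \<and> P k (cell k x0)")
      case True
      then obtain x0 where x0: "cell_index k x0 = c" "P k (cell k x0)"
        by blast
      have "cell k x = cell k x0" if "cell_index k x = c" for x
        using that x0(1) by (simp add: cell_eq_index)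
      with assms[OF x0(2)] show ?thesis
        by (auto elim: AE_mp)
    qed auto
  qed
  then show ?thesis
    by auto
qed

lemma integral_indicator_comp:
  "(\<integral>\<omega>. indicator B (X \<omega>) \<partial>M) = measure M {\<omega>\<in>space M. X \<omega> \<in> B}"
proof -
  have "(\<integral>\<omega>. indicator B (X \<omega>) \<partial>M) = (\<integral>\<omega>. indicator {\<omega>\<in>space M. X \<omega> \<in> B} \<omega> \<partial>M)"
    by (rule Bochner_Integration.integral_cong) (auto simp: indicator_def)
  also have "\<dots> = measure M ({\<omega>\<in>space M. X \<omega> \<in> B} \<inter> space M)"
    by (rule Bochner_Integration.integral_indicator)
  finally show ?thesis
    by (simp add: Int_absorb2)
qed

lemma (in finite_measure) abs_cell_mean_diff_le:
  fixes X :: "'a \<Rightarrow> real^'d" and f :: "'a \<Rightarrow> real"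
  assumes X: "X \<in> borel_measurable M" and f: "f \<in> borel_measurable M"
    and pos: "0 < measure M {\<omega>\<in>space M. X \<omega> \<in> cell k x}" and "0 \<le> \<delta>"
    and bound: "AE \<omega> in M. X \<omega> \<in> cell k x \<longrightarrow> \<bar>f \<omega> - c\<bar> \<le> \<delta>"
  shows "\<bar>cell_mean M X f k x - c\<bar> \<le> \<delta>"
proof -
  let ?I = "\<lambda>\<omega>. indicator (cell k x) (X \<omega>) :: real"
  let ?\<mu> = "measure M {\<omega>\<in>space M. X \<omega> \<in> cell k x}"
  have [measurable]: "X \<in> borel_measurable M" "f \<in> borel_measurable M"
    using X f by auto
  have bound_I: "AE \<omega> in M. \<bar>?I \<omega> * (f \<omega> - c)\<bar> \<le> ?I \<omega> * \<delta>"
    using bound by eventually_elim (simp add: indicator_def \<open>0 \<le> \<delta>\<close>)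
  have int_diff: "integrable M (\<lambda>\<omega>. ?I \<omega> * (f \<omega> - c))"
    using bound \<open>0 \<le> \<delta>\<close> by (intro integrable_const_bound[where B=\<delta>]) (auto simp: indicator_def)
  have int_I: "integrable M ?I"
    by (intro integrable_const_bound[where B=1]) (auto simp: indicator_def)
  have "integrable M (\<lambda>\<omega>. ?I \<omega> * (f \<omega> - c) + ?I \<omega> * c)"
    using int_diff int_I by simp
  then have int_f: "integrable M (\<lambda>\<omega>. ?I \<omega> * f \<omega>)"
    by (simp add: algebra_simps)
  have integral_I: "(\<integral>\<omega>. ?I \<omega> \<partial>M) = ?\<mu>"
    by (rule integral_indicator_comp)
  have "(\<integral>\<omega>. ?I \<omega> * f \<omega> \<partial>M) - c * ?\<mu> = (\<integral>\<omega>. ?I \<omega> * f \<omega> - ?I \<omega> * c \<partial>M)"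
    using int_f int_I integral_I by simp
  also have "\<dots> = (\<integral>\<omega>. ?I \<omega> * (f \<omega> - c) \<partial>M)"
    by (simp add: right_diff_distrib)
  finally have "\<bar>(\<integral>\<omega>. ?I \<omega> * f \<omega> \<partial>M) - c * ?\<mu>\<bar> = \<bar>\<integral>\<omega>. ?I \<omega> * (f \<omega> - c) \<partial>M\<bar>"
    by simp
  also have "\<dots> \<le> (\<integral>\<omega>. \<bar>?I \<omega> * (f \<omega> - c)\<bar> \<partial>M)"
    using integral_norm_bound[of M "\<lambda>\<omega>. ?I \<omega> * (f \<omega> - c)"] by simp
  also have "\<dots> \<le> (\<integral>\<omega>. ?I \<omega> * \<delta> \<partial>M)"
    using int_diff int_I bound_I by (intro integral_mono_AE) auto
  also have "\<dots> = \<delta> * ?\<mu>"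
    using integral_I by simp
  finally show ?thesis
    using pos by (simp add: cell_mean_def abs_le_iff field_simps)
qed

lemma abs_emp_mean_le:
  assumes "\<And>j. \<bar>Y j \<omega>\<bar> \<le> D" and "0 \<le> D"
  shows "\<bar>emp_mean X Y k n \<omega> x\<bar> \<le> D"
proof -
  let ?I = "\<lambda>j. indicator (cell k x) (X j \<omega>) :: real"
  have "\<bar>\<Sum>j<n. Y j \<omega> * ?I j\<bar> \<le> (\<Sum>j<n. D * ?I j)"
    using assms(1) by (intro order_trans[OF sum_abs] sum_mono) (simp add: abs_mult indicator_def)
  then have "\<bar>\<Sum>j<n. Y j \<omega> * ?I j\<bar> \<le> D * (\<Sum>j<n. ?I j)"
    by (simp add: sum_distrib_left)
  moreover have "0 \<le> (\<Sum>j<n. ?I j)"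
    by (simp add: sum_nonneg)
  ultimately show ?thesis
    using \<open>0 \<le> D\<close> by (cases "(\<Sum>j<n. ?I j) = 0") (simp_all add: emp_mean_def abs_divide divide_le_eq)
qed

lemma clip_eq_max_min:
  assumes "0 \<le> L"
  shows "clip L k t = max (- (L / 2^k)) (min (L / 2^k) t)"
proof -
  define a where "a = L / 2^k"
  have "0 \<le> a"
    using assms by (simp add: a_def)
  then show ?thesis
    unfolding clip_def a_def[symmetric] by (auto simp: sgn_if min_def max_def)
qed

lemma abs_clip_le:
  assumes "0 \<le> L"
  shows "\<bar>clip L k t\<bar> \<le> L / 2^k"
proof -
  have "0 \<le> L / 2^k"
    using assms by simp
  then show ?thesis
    unfolding clip_eq_max_min[OF assms] by (auto simp: min_def max_def)
qed

lemma lipschitz_clip: "0 \<le> L \<Longrightarrow> 1-lipschitz_on UNIV (clip L k)"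
  by (intro lipschitz_onI) (auto simp: clip_eq_max_min dist_real_def min_def max_def)

lemma clip_eq_self: "\<bar>t\<bar> \<le> L / 2^k \<Longrightarrow> clip L k t = t"
  by (simp add: clip_def min_absorb1 sgn_mult_abs)

lemma uniform_limit_if_finite_factor:
  fixes f :: "'i \<Rightarrow> 'x \<Rightarrow> 'y::metric_space"
  assumes fin: "finite (\<phi> ` U)"
    and factor: "\<And>n x y. x \<in> U \<Longrightarrow> y \<in> U \<Longrightarrow> \<phi> x = \<phi> y \<Longrightarrow> f n x = f n y \<and> g x = g y"
    and lim: "\<And>x. x \<in> U \<Longrightarrow> ((\<lambda>n. f n x) \<longlongrightarrow> g x) F"
  shows "uniform_limit U f g F"
  unfolding uniform_limit_iff
proof (intro allI impI)
  fix e :: real assume "0 < e"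
  have "\<forall>c\<in>\<phi> ` U. eventually (\<lambda>n. \<forall>x\<in>U. \<phi> x = c \<longrightarrow> dist (f n x) (g x) < e) F"
  proof
    fix c assume "c \<in> \<phi> ` U"
    then obtain x0 where x0: "x0 \<in> U" "c = \<phi> x0"
      by blast
    have "eventually (\<lambda>n. dist (f n x0) (g x0) < e) F"
      using lim[OF x0(1)] \<open>0 < e\<close> by (rule tendstoD)
    then show "eventually (\<lambda>n. \<forall>x\<in>U. \<phi> x = c \<longrightarrow> dist (f n x) (g x) < e) F"
      by eventually_elim (use x0 factor in metis)
  qed
  then have "eventually (\<lambda>n. \<forall>c\<in>\<phi> ` U. \<forall>x\<in>U. \<phi> x = c \<longrightarrow> dist (f n x) (g x) < e) F"
    by (rule eventually_ball_finite[OF fin])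
  then show "eventually (\<lambda>n. \<forall>x\<in>U. dist (f n x) (g x) < e) F"
    by eventually_elim blast
qed

lemma uniform_limit_suminf_dominated:
  fixes F :: "nat \<Rightarrow> 'x \<Rightarrow> nat \<Rightarrow> real"
  assumes conv: "\<And>k. uniform_limit U (\<lambda>n x. F n x k) (\<lambda>x. G x k) sequentially"
    and bound_F: "\<And>n x k. x \<in> U \<Longrightarrow> \<bar>F n x k\<bar> \<le> b k"
    and bound_G: "\<And>x k. x \<in> U \<Longrightarrow> \<bar>G x k\<bar> \<le> b k"
    and b: "summable b"
  shows "uniform_limit U (\<lambda>n x. \<Sum>k. F n x k) (\<lambda>x. \<Sum>k. G x k) sequentially"
  unfolding uniform_limit_iff
proof (intro allI impI)
  fix e :: real assume "0 < e"
  then obtain K where K: "\<bar>\<Sum>i. b (i + K)\<bar> < e / 4"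
    using suminf_exist_split[of "e / 4" b] b by auto
  define \<delta> where "\<delta> = e / (4 * (real K + 1))"
  have "\<forall>k\<in>{..<K}. eventually (\<lambda>n. \<forall>x\<in>U. dist (F n x k) (G x k) < \<delta>) sequentially"
    using conv \<open>0 < e\<close> unfolding uniform_limit_iff \<delta>_def by simp
  then have "eventually (\<lambda>n. \<forall>k\<in>{..<K}. \<forall>x\<in>U. dist (F n x k) (G x k) < \<delta>) sequentially"
    by (rule eventually_ball_finite[OF finite_lessThan])
  then show "eventually (\<lambda>n. \<forall>x\<in>U. dist (\<Sum>k. F n x k) (\<Sum>k. G x k) < e) sequentially"
  proof (rule eventually_mono, intro ballI)
    fix n x assume close: "\<forall>k\<in>{..<K}. \<forall>x\<in>U. dist (F n x k) (G x k) < \<delta>"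
      and x: "x \<in> U"
    have b_K: "summable (\<lambda>i. b (i + K))"
      using b by (rule summable_ignore_initial_segment)
    have tails: "\<bar>\<Sum>i. F n x (i + K)\<bar> \<le> (\<Sum>i. b (i + K))" "\<bar>\<Sum>i. G x (i + K)\<bar> \<le> (\<Sum>i. b (i + K))"
      using norm_suminf_le[of "\<lambda>i. F n x (i + K)" "\<lambda>i. b (i + K)"]
        norm_suminf_le[of "\<lambda>i. G x (i + K)" "\<lambda>i. b (i + K)"] bound_F[OF x] bound_G[OF x] b_K
      by simp_all
    have "\<bar>\<Sum>k<K. F n x k - G x k\<bar> \<le> (\<Sum>k<K. \<delta>)"
      using close x by (intro order_trans[OF sum_abs] sum_mono) (auto simp: dist_real_def less_imp_le)
    also have "\<dots> \<le> e / 4"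
      using \<open>0 < e\<close> by (simp add: \<delta>_def field_simps)
    finally have head: "\<bar>(\<Sum>k<K. F n x k) - (\<Sum>k<K. G x k)\<bar> \<le> e / 4"
      by (simp add: sum_subtractf)
    have "summable (F n x)" "summable (G x)"
      using bound_F[OF x] bound_G[OF x] by (auto intro: summable_comparison_test'[OF b, where N=0])
    then have "(\<Sum>k. F n x k) - (\<Sum>k. G x k) = ((\<Sum>i. F n x (i + K)) - (\<Sum>i. G x (i + K)))
        + ((\<Sum>k<K. F n x k) - (\<Sum>k<K. G x k))"
      using suminf_split_initial_segment by (metis (no_types) add_diff_add)
    then show "dist (\<Sum>k. F n x k) (\<Sum>k. G x k) < e"
      using tails head K unfolding dist_real_def abs_le_iff abs_less_iff by linarith
  qed
qed

lemma ennreal_tendsto_0I: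
  fixes u :: "nat \<Rightarrow> ennreal"
  assumes "\<And>e. 0 < e \<Longrightarrow> eventually (\<lambda>n. u n \<le> ennreal e) sequentially"
  shows "u \<longlonglongrightarrow> 0"
  unfolding order_tendsto_iff
proof (intro conjI allI impI)
  fix a :: ennreal assume "0 < a"
  then obtain b where b: "0 < b" "b < a"
    using dense by blast
  then obtain r where r: "b = ennreal r" "0 < r"
    by (cases b) (auto simp: top_unique)
  show "eventually (\<lambda>n. u n < a) sequentially"
    using assms[OF \<open>0 < r\<close>] by eventually_elim (use b r in auto)
qed simp

lemma (in prob_space) tendsto_nn_integral_sq_0_if_uniform_limit:
  fixes f :: "nat \<Rightarrow> 'a \<Rightarrow> real"
  assumes "AE x in M. x \<in> U" and "uniform_limit U f g sequentially"
  shows "(\<lambda>n. \<integral>\<^sup>+ x. ennreal ((f n x - g x)^2) \<partial>M) \<longlonglongrightarrow> 0"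
proof (rule ennreal_tendsto_0I)
  fix e :: real assume "0 < e"
  then have "eventually (\<lambda>n. \<forall>x\<in>U. dist (f n x) (g x) < sqrt e) sequentially"
    using assms(2) by (simp add: uniform_limit_iff)
  then show "eventually (\<lambda>n. (\<integral>\<^sup>+ x. ennreal ((f n x - g x)^2) \<partial>M) \<le> ennreal e) sequentially"
  proof eventually_elim
    case (elim n)
    note close = this
    have "AE x in M. ennreal ((f n x - g x)^2) \<le> ennreal e"
      using assms(1)
    proof eventually_elim
      case (elim x)
      then have "\<bar>f n x - g x\<bar> < sqrt e"
        using close by (simp add: dist_real_def)
      then have "\<bar>f n x - g x\<bar>^2 \<le> (sqrt e)^2"
        by (intro power_mono) auto
      then show "ennreal ((f n x - g x)^2) \<le> ennreal e"
        using \<open>0 < e\<close> by (intro ennreal_leI) simp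
    qed
    then have "(\<integral>\<^sup>+ x. ennreal ((f n x - g x)^2) \<partial>M) \<le> (\<integral>\<^sup>+ x. ennreal e \<partial>M)"
      by (rule nn_integral_mono_AE)
    then show ?case
      by (simp add: emeasure_space_1)
  qed
qed

lemma (in prob_space) nonneg_if_AE_abs_le:
  assumes "AE \<omega> in M. \<bar>f \<omega>\<bar> \<le> (D::real)"
  shows "0 \<le> D"
proof -
  have "AE \<omega> in M. 0 \<le> D"
    using assms by eventually_elim linarith
  then show ?thesis
    by simp
qed

section \<open>The regression function as a limit of cell means\<close>

locale stationary_regression = prob_space M
  for M :: "'a measure" and X :: "nat \<Rightarrow> 'a \<Rightarrow> real^'d" and Y :: "nat \<Rightarrow> 'a \<Rightarrow> real"
    and m :: "real^'d \<Rightarrow> real" and C L :: real +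
  assumes stationary: "stationary_process M (\<lambda>i \<omega>. (X i \<omega>, Y i \<omega>))"
    and ergodic: "ergodic_process M (\<lambda>i \<omega>. (X i \<omega>, Y i \<omega>))"
    and integrable_Y: "integrable M (Y 0)"
    and regression: "AE \<omega> in M. real_cond_exp M (vimage_algebra (space M) (X 0) borel) (Y 0) \<omega> = m (X 0 \<omega>)"
    and lipschitz: "C-lipschitz_on UNIV m"
    and L_ge: "L \<ge> C * sqrt (real CARD('d))"
begin

lemma measurable_XY: "(\<lambda>\<omega>. (X i \<omega>, Y i \<omega>)) \<in> borel_measurable M"
  using stationary by (simp add: stationary_process_def)

lemma measurable_X [measurable]: "X i \<in> borel_measurable M"
  using measurable_compose[OF measurable_XY borel_measurable_continuous_onI[OF continuous_on_fst[OF continuous_on_id]]]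
  by simp

lemma measurable_Y [measurable]: "Y i \<in> borel_measurable M"
  using measurable_compose[OF measurable_XY borel_measurable_continuous_onI[OF continuous_on_snd[OF continuous_on_id]]]
  by simp

lemma measurable_m [measurable]: "m \<in> borel_measurable borel"
  by (intro borel_measurable_continuous_onI lipschitz_on_continuous_on[OF lipschitz])

lemma C_nonneg: "0 \<le> C"
  using lipschitz by (rule lipschitz_on_nonneg)

lemma L_nonneg: "0 \<le> L"
proof -
  have "0 \<le> C * sqrt (real CARD('d))"
    using C_nonneg by simp
  with L_ge show ?thesis
    by linarith
qed

definition cell_prob :: "nat \<Rightarrow> real^'d \<Rightarrow> real" where
  "cell_prob k x = measure M {\<omega>\<in>space M. X 0 \<omega> \<in> cell k x}"

lemma cell_prob_pos: "x \<in> pos_set M (X 0) \<Longrightarrow> 1 \<le> k \<Longrightarrow> 0 < cell_prob k x"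
  by (simp add: pos_set_def cell_prob_def)

lemma sigma_finite_subalgebra_X: "sigma_finite_subalgebra M (vimage_algebra (space M) (X 0) borel)"
proof (intro finite_measure_subalgebra_is_sigma_finite finite_measure_subalgebra.intro
    finite_measure_subalgebra_axioms.intro finite_measure_axioms)
  have "sets (vimage_algebra (space M) (X 0) borel) \<subseteq> sets M"
    by (auto simp: sets_vimage_algebra2)
  then show "subalgebra M (vimage_algebra (space M) (X 0) borel)"
    by (simp add: subalgebra_def)
qed

text \<open>The tower property replaces \<open>Y\<close> by \<open>E(Y | X) = m(X)\<close> on the \<open>X\<close>-measurable event
  \<open>{X \<in> cell k x}\<close>.\<close>
lemma cell_mean_regression: "cell_mean M (X 0) (Y 0) k x = cell_mean M (X 0) (\<lambda>\<omega>. m (X 0 \<omega>)) k x"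
proof -
  let ?F = "vimage_algebra (space M) (X 0) borel"
  interpret sigma_finite_subalgebra M ?F
    by (rule sigma_finite_subalgebra_X)
  have "X 0 \<in> measurable ?F borel"
    by (rule measurable_vimage_algebra1) simp
  then have indicator_F: "(\<lambda>\<omega>. indicator (cell k x) (X 0 \<omega>) :: real) \<in> borel_measurable ?F"
    by measurable
  have "integrable M (\<lambda>\<omega>. indicator (cell k x) (X 0 \<omega>) * Y 0 \<omega>)"
    using integrable_Y by (rule Bochner_Integration.integrable_bound) (simp_all add: indicator_def)
  then have "(\<integral>\<omega>. indicator (cell k x) (X 0 \<omega>) * Y 0 \<omega> \<partial>M)
      = (\<integral>\<omega>. indicator (cell k x) (X 0 \<omega>) * real_cond_exp M ?F (Y 0) \<omega> \<partial>M)"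
    using indicator_F by (intro real_cond_exp_intg(2)[symmetric]) simp_all
  also have "\<dots> = (\<integral>\<omega>. indicator (cell k x) (X 0 \<omega>) * m (X 0 \<omega>) \<partial>M)"
  proof (rule integral_cong_AE)
    show "AE \<omega> in M. indicator (cell k x) (X 0 \<omega>) * real_cond_exp M ?F (Y 0) \<omega>
        = indicator (cell k x) (X 0 \<omega>) * m (X 0 \<omega>)"
      using regression by eventually_elim simp
    show "(\<lambda>\<omega>. indicator (cell k x) (X 0 \<omega>) * real_cond_exp M ?F (Y 0) \<omega>) \<in> borel_measurable M"
      using borel_measurable_cond_exp2[of M ?F "Y 0"] by measurable
  qed measurable
  finally show ?thesis
    by (simp add: cell_mean_def)
qed

lemma abs_cell_mean_diff_le_regression:
  assumes "0 < cell_prob k x"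
  shows "\<bar>cell_mean M (X 0) (Y 0) k x - m x\<bar> \<le> C * sqrt (real CARD('d)) / 2^(k+2)"
  unfolding cell_mean_regression
proof (rule abs_cell_mean_diff_le)
  show "0 < measure M {\<omega>\<in>space M. X 0 \<omega> \<in> cell k x}"
    using assms by (simp add: cell_prob_def)
  show "0 \<le> C * sqrt (real CARD('d)) / 2^(k+2)"
    using C_nonneg by simp
  have "\<bar>m y - m x\<bar> \<le> C * sqrt (real CARD('d)) / 2^(k+2)" if "y \<in> cell k x" for y
  proof -
    have "\<bar>m y - m x\<bar> \<le> C * dist y x"
      using lipschitz_onD[OF lipschitz, of y x] by (simp add: dist_real_def)
    also have "\<dots> \<le> C * (sqrt (real CARD('d)) / 2^(k+2))"
      using dist_le_if_mem_cell[OF that] C_nonneg by (rule mult_left_mono)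
    finally show ?thesis
      by simp
  qed
  then show "AE \<omega> in M. X 0 \<omega> \<in> cell k x \<longrightarrow> \<bar>m (X 0 \<omega>) - m x\<bar> \<le> C * sqrt (real CARD('d)) / 2^(k+2)"
    by simp
qed simp_all

lemma cell_mean_tendsto:
  assumes "x \<in> pos_set M (X 0)"
  shows "(\<lambda>k. cell_mean M (X 0) (Y 0) (k+1) x) \<longlonglongrightarrow> m x"
proof -
  have "(\<lambda>k. C * sqrt (real CARD('d)) / 2^k) \<longlonglongrightarrow> 0"
    by (rule LIMSEQ_divide_realpow_zero) simp
  from LIMSEQ_ignore_initial_segment[OF LIMSEQ_ignore_initial_segment[OF this, of 2], of 1]
  have bound_tendsto: "(\<lambda>k. C * sqrt (real CARD('d)) / 2^(k+1+2)) \<longlonglongrightarrow> 0" .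
  have "norm (cell_mean M (X 0) (Y 0) (k+1) x - m x) \<le> C * sqrt (real CARD('d)) / 2^(k+1+2)" for k
    unfolding real_norm_def by (rule abs_cell_mean_diff_le_regression[OF cell_prob_pos[OF assms]]) simp
  then have "(\<lambda>k. cell_mean M (X 0) (Y 0) (k+1) x - m x) \<longlonglongrightarrow> 0"
    using bound_tendsto by (rule Lim_null_comparison[OF always_eventually[OF allI]])
  then show ?thesis
    by (simp add: LIM_zero_iff)
qed

text \<open>Consecutive cell means differ by at most \<open>(3/4) C \<surd>d 2\<^sup>-\<^sup>k\<close>, so for \<open>L \<ge> C \<surd>d\<close> the
  truncation is inactive and the series telescopes.\<close>
theorem m_L_eq:
  assumes x: "x \<in> pos_set M (X 0)"
  shows "m_L M (X 0) (Y 0) L x = m x"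
proof -
  define a where "a k = cell_mean M (X 0) (Y 0) (k+1) x" for k
  define Cd where "Cd = C * sqrt (real CARD('d))"
  have a_close: "\<bar>a k - m x\<bar> \<le> Cd / 2^(k+1+2)" for k
    unfolding a_def Cd_def by (rule abs_cell_mean_diff_le_regression[OF cell_prob_pos[OF x]]) simp
  have increment: "clip L (k+2) (a (Suc k) - a k) = a (Suc k) - a k" for k
  proof (rule clip_eq_self)
    have "\<bar>a (Suc k) - a k\<bar> \<le> Cd / 2^(Suc k+1+2) + Cd / 2^(k+1+2)"
      using a_close[of "Suc k"] a_close[of k] by linarith
    also have "\<dots> = (3/4) * (Cd / 2^(k+2))"
      by (simp add: power_add field_simps)
    also have "\<dots> \<le> Cd / 2^(k+2)"
      using C_nonneg by (intro mult_left_le_one_le) (simp_all add: Cd_def)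
    also have "\<dots> \<le> L / 2^(k+2)"
      using L_ge by (simp add: Cd_def divide_right_mono)
    finally show "\<bar>a (Suc k) - a k\<bar> \<le> L / 2^(k+2)" .
  qed
  have "(\<lambda>k. a (Suc k) - a k) sums (m x - a 0)"
    using cell_mean_tendsto[OF x] by (intro telescope_sums) (simp add: a_def)
  then have "(\<Sum>k. clip L (k+2) (a (Suc k) - a k)) = m x - a 0"
    unfolding increment by (simp add: sums_iff)
  moreover have "m_L M (X 0) (Y 0) L x = a 0 + (\<Sum>k. clip L (k+2) (a (Suc k) - a k))"
    by (simp add: m_L_def a_def)
  ultimately show ?thesis
    by simp
qed

lemma emp_mean_tendsto:
  assumes pos: "0 < cell_prob k x"
  shows "AE \<omega> in M. (\<lambda>n. emp_mean X Y k n \<omega> x) \<longlonglongrightarrow> cell_mean M (X 0) (Y 0) k x"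
proof -
  have [measurable]: "fst \<in> borel_measurable (borel :: ((real^'d) \<times> real) measure)"
    "snd \<in> borel_measurable (borel :: ((real^'d) \<times> real) measure)"
    by (intro borel_measurable_continuous_onI continuous_on_fst continuous_on_snd continuous_on_id)+
  define h1 where "h1 p = (indicator (cell k x) (fst p) :: real)" for p :: "(real^'d) \<times> real"
  define h2 where "h2 p = snd p * indicator (cell k x) (fst p)" for p :: "(real^'d) \<times> real"
  have h_meas: "h1 \<in> borel_measurable borel" "h2 \<in> borel_measurable borel"
    unfolding h1_def[abs_def] h2_def[abs_def] by measurable
  have int_h1: "integrable M (\<lambda>\<omega>. h1 (X 0 \<omega>, Y 0 \<omega>))"
    by (intro integrable_const_bound[where B=1]) (auto simp: h1_def indicator_def)
  have int_h2: "integrable M (\<lambda>\<omega>. h2 (X 0 \<omega>, Y 0 \<omega>))"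
    unfolding h2_def using integrable_Y
    by (rule Bochner_Integration.integrable_bound) (simp_all add: indicator_def)
  have integral_h1: "(\<integral>\<omega>. h1 (X 0 \<omega>, Y 0 \<omega>) \<partial>M) = cell_prob k x"
    by (simp add: h1_def cell_prob_def integral_indicator_comp)
  have cell_mean_h2: "cell_mean M (X 0) (Y 0) k x = (\<integral>\<omega>. h2 (X 0 \<omega>, Y 0 \<omega>) \<partial>M) / cell_prob k x"
    by (simp add: cell_mean_def cell_prob_def h2_def mult.commute)
  have "AE \<omega> in M. (\<lambda>n. (\<Sum>j<n. h1 (X j \<omega>, Y j \<omega>)) / real n) \<longlonglongrightarrow> (\<integral>\<omega>. h1 (X 0 \<omega>, Y 0 \<omega>) \<partial>M)"
    "AE \<omega> in M. (\<lambda>n. (\<Sum>j<n. h2 (X j \<omega>, Y j \<omega>)) / real n) \<longlonglongrightarrow> (\<integral>\<omega>. h2 (X 0 \<omega>, Y 0 \<omega>) \<partial>M)"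
    using ergodic_process_averages_tendsto[OF prob_space_axioms stationary ergodic h_meas(1) int_h1]
      ergodic_process_averages_tendsto[OF prob_space_axioms stationary ergodic h_meas(2) int_h2]
    by simp_all
  then show ?thesis
  proof eventually_elim
    case (elim \<omega>)
    have lim: "(\<lambda>n. ((\<Sum>j<n. h2 (X j \<omega>, Y j \<omega>)) / real n) / ((\<Sum>j<n. h1 (X j \<omega>, Y j \<omega>)) / real n))
        \<longlonglongrightarrow> cell_mean M (X 0) (Y 0) k x"
      unfolding cell_mean_h2 using elim(1) pos unfolding integral_h1 by (intro tendsto_divide elim(2)) auto
    have ev: "eventually (\<lambda>n. ((\<Sum>j<n. h2 (X j \<omega>, Y j \<omega>)) / real n) / ((\<Sum>j<n. h1 (X j \<omega>, Y j \<omega>)) / real n)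
        = emp_mean X Y k n \<omega> x) sequentially"
      using eventually_gt_at_top[of 0] by eventually_elim (simp add: emp_mean_def h1_def h2_def)
    show ?case
      using tendsto_cong[OF ev] lim by simp
  qed
qed

lemma AE_emp_mean_tendsto:
  "AE \<omega> in M. \<forall>k x. 0 < cell_prob k x \<longrightarrow> (\<lambda>n. emp_mean X Y k n \<omega> x) \<longlonglongrightarrow> cell_mean M (X 0) (Y 0) k x"
  using AE_all_cells[where P="\<lambda>k A. 0 < measure M {\<omega>\<in>space M. X 0 \<omega> \<in> A}"
      and Q="\<lambda>k A \<omega>. (\<lambda>n. (\<Sum>j<n. Y j \<omega> * indicator A (X j \<omega>)) / (\<Sum>j<n. indicator A (X j \<omega>)))
        \<longlonglongrightarrow> (\<integral>\<omega>. indicator A (X 0 \<omega>) * Y 0 \<omega> \<partial>M) / measure M {\<omega>\<in>space M. X 0 \<omega> \<in> A}"]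
    emp_mean_tendsto
  by (simp add: emp_mean_def cell_mean_def cell_prob_def)

section \<open>Consistency of the estimator\<close>

definition clipped_increment :: "real^'d \<Rightarrow> nat \<Rightarrow> real" where
  "clipped_increment x k =
     clip L (k+2) (cell_mean M (X 0) (Y 0) (k+2) x - cell_mean M (X 0) (Y 0) (k+1) x)"

definition emp_clipped_increment :: "nat \<Rightarrow> nat \<Rightarrow> 'a \<Rightarrow> real^'d \<Rightarrow> nat \<Rightarrow> real" where
  "emp_clipped_increment K n \<omega> x k =
     (if k + 2 \<le> K then clip L (k+2) (emp_mean X Y (k+2) n \<omega> x - emp_mean X Y (k+1) n \<omega> x) else 0)"

lemma abs_clipped_increment_le: "\<bar>clipped_increment x k\<bar> \<le> L / 2^(k+2)"
  unfolding clipped_increment_def using L_nonneg by (rule abs_clip_le)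

lemma abs_emp_clipped_increment_le: "\<bar>emp_clipped_increment K n \<omega> x k\<bar> \<le> L / 2^(k+2)"
  unfolding emp_clipped_increment_def using abs_clip_le[OF L_nonneg, of "k+2"] L_nonneg by simp

lemma summable_clip_bound: "summable (\<lambda>k. L / 2^(k+2))"
  using summable_mult[OF summable_geometric[of "1/2"], of "L / 4"] by (simp add: power_add field_simps)

lemma m_L_eq_suminf: "m_L M (X 0) (Y 0) L x = cell_mean M (X 0) (Y 0) 1 x + (\<Sum>k. clipped_increment x k)"
  by (simp add: m_L_def clipped_increment_def)

lemma m_hat_eq_suminf:
  assumes "1 \<le> K"
  shows "m_hat X Y L K n \<omega> x = emp_mean X Y 1 n \<omega> x + (\<Sum>k. emp_clipped_increment K n \<omega> x k)"
proof -
  let ?d = "\<lambda>k. clip L k (emp_mean X Y k n \<omega> x - emp_mean X Y (k - 1) n \<omega> x)"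
  have "{2..K} = {0 + 2..<(K - 1) + 2}"
    using assms by auto
  then have "(\<Sum>k\<in>{2..K}. ?d k) = (\<Sum>k<K - 1. ?d (k + 2))"
    by (simp only: sum.shift_bounds_nat_ivl atLeast0LessThan)
  also have "\<dots> = (\<Sum>k<K - 1. emp_clipped_increment K n \<omega> x k)"
    by (rule sum.cong) (auto simp: emp_clipped_increment_def)
  also have "\<dots> = (\<Sum>k. emp_clipped_increment K n \<omega> x k)"
    by (rule sums_unique[OF sums_finite]) (auto simp: emp_clipped_increment_def)
  finally show ?thesis
    by (simp add: m_hat_def)
qed

lemma uniform_limit_emp_clipped_increment:
  assumes N: "filterlim N at_top sequentially"
    and level: "\<And>j. 1 \<le> j \<Longrightarrow>
      uniform_limit U (\<lambda>n x. emp_mean X Y j n \<omega> x) (cell_mean M (X 0) (Y 0) j) sequentially"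
  shows "uniform_limit U (\<lambda>n x. emp_clipped_increment (N n) n \<omega> x k) (\<lambda>x. clipped_increment x k) sequentially"
proof -
  have "uniform_limit U (\<lambda>n x. clip L (k+2) (emp_mean X Y (k+2) n \<omega> x - emp_mean X Y (k+1) n \<omega> x))
      (clip L (k+2) \<circ> (\<lambda>x. cell_mean M (X 0) (Y 0) (k+2) x - cell_mean M (X 0) (Y 0) (k+1) x)) sequentially"
    using lipschitz_on_uniformly_continuous[OF lipschitz_clip[OF L_nonneg]]
    by (intro uniform_limit_compose[where U=UNIV] uniform_limit_minus level) simp_all
  moreover have "eventually (\<lambda>n. \<forall>x\<in>U. emp_clipped_increment (N n) n \<omega> x k
      = clip L (k+2) (emp_mean X Y (k+2) n \<omega> x - emp_mean X Y (k+1) n \<omega> x)) sequentially"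
    using filterlim_at_top[THEN iffD1, OF N, rule_format, of "k+2"]
    by eventually_elim (simp add: emp_clipped_increment_def)
  ultimately show ?thesis
    by (subst uniform_limit_cong) (simp_all add: clipped_increment_def)
qed

theorem uniform_limit_m_hat:
  assumes N1: "\<forall>n. 1 \<le> N n" and N: "filterlim N at_top sequentially"
    and U: "U \<subseteq> pos_set M (X 0)"
    and level: "\<And>j. 1 \<le> j \<Longrightarrow>
      uniform_limit U (\<lambda>n x. emp_mean X Y j n \<omega> x) (cell_mean M (X 0) (Y 0) j) sequentially"
  shows "uniform_limit U (\<lambda>n x. m_hat X Y L (N n) n \<omega> x) m sequentially"
proof -
  have "uniform_limit U (\<lambda>n x. \<Sum>k. emp_clipped_increment (N n) n \<omega> x k) (\<lambda>x. \<Sum>k. clipped_increment x k) sequentially"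
    using N level abs_emp_clipped_increment_le abs_clipped_increment_le summable_clip_bound
    by (intro uniform_limit_suminf_dominated uniform_limit_emp_clipped_increment) auto
  then have "uniform_limit U (\<lambda>n x. emp_mean X Y 1 n \<omega> x + (\<Sum>k. emp_clipped_increment (N n) n \<omega> x k))
      (\<lambda>x. cell_mean M (X 0) (Y 0) 1 x + (\<Sum>k. clipped_increment x k)) sequentially"
    using level[of 1] by (intro uniform_limit_add) simp_all
  moreover have "m x = cell_mean M (X 0) (Y 0) 1 x + (\<Sum>k. clipped_increment x k)" if "x \<in> U" for x
    using that U m_L_eq m_L_eq_suminf by auto
  ultimately show ?thesis
    using N1 by (subst uniform_limit_cong'[where g="\<lambda>n x. emp_mean X Y 1 n \<omega> x + _ n x"]) (simp_all add: m_hat_eq_suminf)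
qed

theorem AE_m_hat_tendsto:
  assumes "\<forall>n. 1 \<le> N n" and "filterlim N at_top sequentially"
  shows "AE \<omega> in M. \<forall>x \<in> pos_set M (X 0). (\<lambda>n. m_hat X Y L (N n) n \<omega> x) \<longlonglongrightarrow> m x"
  using AE_emp_mean_tendsto
proof eventually_elim
  case (elim \<omega>)
  show ?case
  proof
    fix x assume "x \<in> pos_set M (X 0)"
    then have "uniform_limit {x} (\<lambda>n x. m_hat X Y L (N n) n \<omega> x) m sequentially"
      using assms elim cell_prob_pos by (intro uniform_limit_m_hat) auto
    then show "(\<lambda>n. m_hat X Y L (N n) n \<omega> x) \<longlonglongrightarrow> m x"
      by simp
  qed
qed

theorem AE_uniform_limit_m_hat:
  assumes "\<forall>n. 1 \<le> N n" and "filterlim N at_top sequentially"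
    and bounded: "bounded (pos_set M (X 0))"
  shows "AE \<omega> in M. uniform_limit (pos_set M (X 0)) (\<lambda>n x. m_hat X Y L (N n) n \<omega> x) m sequentially"
  using AE_emp_mean_tendsto
proof eventually_elim
  case (elim \<omega>)
  have "uniform_limit (pos_set M (X 0)) (\<lambda>n x. emp_mean X Y j n \<omega> x) (cell_mean M (X 0) (Y 0) j) sequentially"
    if "1 \<le> j" for j
  proof (rule uniform_limit_if_finite_factor[where \<phi>="cell_index j"])
    show "finite (cell_index j ` pos_set M (X 0))"
      using bounded by (rule finite_cell_index_image)
    show "emp_mean X Y j n \<omega> x = emp_mean X Y j n \<omega> y \<and> cell_mean M (X 0) (Y 0) j x = cell_mean M (X 0) (Y 0) j y"
      if "cell_index j x = cell_index j y" for n x y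
      using that by (simp add: emp_mean_def cell_mean_def cell_eq_index)
    show "(\<lambda>n. emp_mean X Y j n \<omega> x) \<longlonglongrightarrow> cell_mean M (X 0) (Y 0) j x" if "x \<in> pos_set M (X 0)" for x
      using elim cell_prob_pos[OF that \<open>1 \<le> j\<close>] by blast
  qed
  with assms show ?case
    by (intro uniform_limit_m_hat) auto
qed

section \<open>Mean square consistency\<close>

abbreviation \<mu> :: "(real^'d) measure" where
  "\<mu> \<equiv> distr M borel (X 0)"

lemma prob_space_\<mu>: "prob_space \<mu>"
  by (rule prob_space_distr) simp

lemma AE_mem_pos_set: "AE x in \<mu>. x \<in> pos_set M (X 0)"
proof -
  have "AE \<xi> in \<mu>. \<forall>k x. measure M {\<omega>\<in>space M. X 0 \<omega> \<in> cell k x} = 0 \<longrightarrow> \<xi> \<notin> cell k x"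
  proof (rule AE_all_cells[where P="\<lambda>k A. measure M {\<omega>\<in>space M. X 0 \<omega> \<in> A} = 0" and Q="\<lambda>k A \<xi>. \<xi> \<notin> A"])
    fix k x assume "measure M {\<omega>\<in>space M. X 0 \<omega> \<in> cell k x} = 0"
    then have "emeasure \<mu> (cell k x) = 0"
      by (simp add: emeasure_distr emeasure_eq_measure vimage_def Int_def conj_commute)
    then show "AE \<xi> in \<mu>. \<xi> \<notin> cell k x"
      by (intro AE_not_in) (simp add: null_sets_def)
  qed
  then show ?thesis
  proof eventually_elim
    case (elim \<xi>)
    then have "measure M {\<omega>\<in>space M. X 0 \<omega> \<in> cell k \<xi>} \<noteq> 0" for k
      using mem_cell_self by blast
    then show "\<xi> \<in> pos_set M (X 0)"
      by (simp add: pos_set_def less_le)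
  qed
qed

lemma bounded_pos_set_if_bounded_support:
  assumes "AE \<omega> in M. norm (X 0 \<omega>) \<le> r"
  shows "bounded (pos_set M (X 0))"
  unfolding bounded_iff
proof (intro exI ballI)
  fix x assume x: "x \<in> pos_set M (X 0)"
  have "\<exists>\<omega>\<in>space M. X 0 \<omega> \<in> cell 1 x \<and> norm (X 0 \<omega>) \<le> r"
  proof (rule ccontr)
    assume no_witness: "\<not> ?thesis"
    have "AE \<omega> in M. X 0 \<omega> \<notin> cell 1 x"
      using AE_space assms by eventually_elim (use no_witness in auto)
    then have "cell_prob 1 x = 0"
      by (simp add: cell_prob_def AE_iff_measurable[OF _ refl] emeasure_eq_measure)
    with cell_prob_pos[OF x, of 1] show False
      by simp
  qed
  then obtain \<omega> where \<omega>: "X 0 \<omega> \<in> cell 1 x" "norm (X 0 \<omega>) \<le> r"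
    by blast
  have "norm x \<le> norm (X 0 \<omega>) + dist (X 0 \<omega>) x"
    by (metis dist_norm norm_minus_commute norm_triangle_sub)
  also have "\<dots> \<le> r + sqrt (real CARD('d)) / 2^(1+2)"
    using \<omega>(2) dist_le_if_mem_cell[OF \<omega>(1)] by (rule add_mono)
  finally show "norm x \<le> r + sqrt (real CARD('d)) / 2^(1+2)" .
qed

theorem AE_tendsto_nn_integral_sq_if_bounded_support:
  assumes "\<forall>n. 1 \<le> N n" and "filterlim N at_top sequentially"
    and "AE \<omega> in M. norm (X 0 \<omega>) \<le> r"
  shows "AE \<omega> in M. (\<lambda>n. \<integral>\<^sup>+ x. ennreal ((m_hat X Y L (N n) n \<omega> x - m x)^2) \<partial>\<mu>) \<longlonglongrightarrow> 0"
  using AE_uniform_limit_m_hat[OF assms(1,2) bounded_pos_set_if_bounded_support[OF assms(3)]]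
  by eventually_elim (rule prob_space.tendsto_nn_integral_sq_0_if_uniform_limit[OF prob_space_\<mu> AE_mem_pos_set])

lemma AE_abs_Y_le:
  assumes "AE \<omega> in M. \<bar>Y 0 \<omega>\<bar> \<le> D"
  shows "AE \<omega> in M. \<forall>j. \<bar>Y j \<omega>\<bar> \<le> D"
proof -
  have "snd \<in> borel_measurable (borel :: ((real^'d) \<times> real) measure)"
    by (intro borel_measurable_continuous_onI continuous_on_snd continuous_on_id)
  then have "{p :: (real^'d) \<times> real. \<bar>snd p\<bar> \<le> D} \<in> sets borel"
    by measurable
  then have "AE \<omega> in M. \<bar>snd (X j \<omega>, Y j \<omega>)\<bar> \<le> D" for j
    by (rule stationary_process_AE_component[OF prob_space_axioms stationary]) (use assms in simp)
  then show ?thesis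
    by (simp add: AE_all_countable)
qed

lemma abs_m_le:
  assumes D: "AE \<omega> in M. \<bar>Y 0 \<omega>\<bar> \<le> D" and x: "x \<in> pos_set M (X 0)"
  shows "\<bar>m x\<bar> \<le> D"
proof (rule LIMSEQ_le_const2)
  show "(\<lambda>k. \<bar>cell_mean M (X 0) (Y 0) (k+1) x\<bar>) \<longlonglongrightarrow> \<bar>m x\<bar>"
    by (intro tendsto_rabs cell_mean_tendsto x)
  have "AE \<omega> in M. X 0 \<omega> \<in> cell (k+1) x \<longrightarrow> \<bar>Y 0 \<omega> - 0\<bar> \<le> D" for k
    using D by eventually_elim simp
  then have "\<bar>cell_mean M (X 0) (Y 0) (k+1) x - 0\<bar> \<le> D" for k
    using cell_prob_pos[OF x, of "k+1"] nonneg_if_AE_abs_le[OF D]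
    by (intro abs_cell_mean_diff_le) (simp_all add: cell_prob_def)
  then show "\<exists>N. \<forall>k\<ge>N. \<bar>cell_mean M (X 0) (Y 0) (k+1) x\<bar> \<le> D"
    by simp
qed

lemma abs_m_hat_le:
  assumes "\<And>j. \<bar>Y j \<omega>\<bar> \<le> D" and "0 \<le> D" and "1 \<le> K"
  shows "\<bar>m_hat X Y L K n \<omega> x\<bar> \<le> D + (\<Sum>k. L / 2^(k+2))"
proof -
  have "norm (\<Sum>k. emp_clipped_increment K n \<omega> x k) \<le> (\<Sum>k. L / 2^(k+2))"
    by (rule norm_suminf_le[OF _ summable_clip_bound]) (simp only: real_norm_def abs_emp_clipped_increment_le)
  then have "\<bar>\<Sum>k. emp_clipped_increment K n \<omega> x k\<bar> \<le> (\<Sum>k. L / 2^(k+2))"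
    by simp
  moreover have "\<bar>emp_mean X Y 1 n \<omega> x\<bar> \<le> D"
    using assms(1,2) by (rule abs_emp_mean_le)
  ultimately show ?thesis
    unfolding m_hat_eq_suminf[OF assms(3)] by linarith
qed

lemma abs_m_hat_diff_le:
  assumes D: "AE \<omega> in M. \<bar>Y 0 \<omega>\<bar> \<le> D" and "\<And>j. \<bar>Y j \<omega>\<bar> \<le> D"
    and "x \<in> pos_set M (X 0)" and "1 \<le> K"
  shows "\<bar>m_hat X Y L K n \<omega> x - m x\<bar> \<le> 2 * D + (\<Sum>k. L / 2^(k+2))"
proof -
  have "\<bar>m_hat X Y L K n \<omega> x\<bar> \<le> D + (\<Sum>k. L / 2^(k+2))"
    using assms(2) nonneg_if_AE_abs_le[OF D] assms(4) by (rule abs_m_hat_le)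
  then show ?thesis
    using abs_m_le[OF D assms(3)] abs_triangle_ineq4[of "m_hat X Y L K n \<omega> x" "m x"] by linarith
qed

lemma measurable_m_hat [measurable]: "(\<lambda>x. m_hat X Y L K n \<omega> x) \<in> borel_measurable borel"
proof -
  have emp_mean_eq: "emp_mean X Y k n \<omega> = (\<lambda>x. (\<Sum>j<n. Y j \<omega> * indicator (cell k (X j \<omega>)) x)
      / (\<Sum>j<n. indicator (cell k (X j \<omega>)) x))" for k
    by (simp add: fun_eq_iff emp_mean_def indicator_def mem_cell_commute)
  have [measurable]: "emp_mean X Y k n \<omega> \<in> borel_measurable borel" for k
    unfolding emp_mean_eq by measurable
  show ?thesis
    unfolding m_hat_def clip_eq_max_min[OF L_nonneg] by measurable
qed

theorem AE_tendsto_nn_integral_sq_if_bounded_response: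
  assumes N1: "\<forall>n. 1 \<le> N n" and N: "filterlim N at_top sequentially"
    and D: "AE \<omega> in M. \<bar>Y 0 \<omega>\<bar> \<le> D"
  shows "AE \<omega> in M. (\<lambda>n. \<integral>\<^sup>+ x. ennreal ((m_hat X Y L (N n) n \<omega> x - m x)^2) \<partial>\<mu>) \<longlonglongrightarrow> 0"
  using AE_m_hat_tendsto[OF N1 N] AE_abs_Y_le[OF D]
proof eventually_elim
  case (elim \<omega>)
  define W where "W = (2 * D + (\<Sum>k. L / 2^(k+2)))^2"
  have "(\<lambda>n. \<integral>\<^sup>+ x. norm (0 - (m_hat X Y L (N n) n \<omega> x - m x)^2) \<partial>\<mu>) \<longlonglongrightarrow> 0"
  proof (rule nn_integral_dominated_convergence_norm[where w="\<lambda>_. W"])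
    show "AE x in \<mu>. norm ((m_hat X Y L (N n) n \<omega> x - m x)^2) \<le> W" for n
      using AE_mem_pos_set
    proof eventually_elim
      case (elim x)
      with abs_m_hat_diff_le[OF D _ elim, of \<omega> "N n"] N1 \<open>\<forall>j. \<bar>Y j \<omega>\<bar> \<le> D\<close>
      have "\<bar>m_hat X Y L (N n) n \<omega> x - m x\<bar> \<le> 2 * D + (\<Sum>k. L / 2^(k+2))"
        by simp
      from power_mono[OF this abs_ge_zero, of 2] show ?case
        by (simp add: W_def)
    qed
    show "AE x in \<mu>. (\<lambda>n. (m_hat X Y L (N n) n \<omega> x - m x)^2) \<longlonglongrightarrow> 0"
      using AE_mem_pos_set
    proof eventually_elim
      case (elim x)
      then have "(\<lambda>n. m_hat X Y L (N n) n \<omega> x) \<longlonglongrightarrow> m x"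
        using \<open>\<forall>x\<in>pos_set M (X 0). (\<lambda>n. m_hat X Y L (N n) n \<omega> x) \<longlonglongrightarrow> m x\<close> by blast
      then have "(\<lambda>n. (m_hat X Y L (N n) n \<omega> x - m x)^2) \<longlonglongrightarrow> (m x - m x)^2"
        by (intro tendsto_power tendsto_diff tendsto_const)
      then show ?case
        by simp
    qed
    show "(\<integral>\<^sup>+ x. W \<partial>\<mu>) < \<infinity>"
      using prob_space.emeasure_space_1[OF prob_space_\<mu>] by simp
    show "(\<lambda>x. (m_hat X Y L (N n) n \<omega> x - m x)^2) \<in> borel_measurable \<mu>" for n
      using measurable_m_hat[of "N n" n \<omega>] by simp
    show "(\<lambda>x. 0) \<in> borel_measurable \<mu>" "(\<lambda>x. W) \<in> borel_measurable \<mu>"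
      by simp_all
  qed
  then show ?case
    by simp
qed

end

theorem corollary1:
  fixes M :: "'a measure"
    and X :: "nat \<Rightarrow> 'a \<Rightarrow> real^'d"
    and Y :: "nat \<Rightarrow> 'a \<Rightarrow> real"
    and m :: "real^'d \<Rightarrow> real"
    and C L :: real
    and N :: "nat \<Rightarrow> nat"
  assumes "prob_space M"
    and "stationary_process M (\<lambda>i \<omega>. (X i \<omega>, Y i \<omega>))"
    and "ergodic_process M (\<lambda>i \<omega>. (X i \<omega>, Y i \<omega>))"
    and "integrable M (Y 0)"
    and "AE \<omega> in M. real_cond_exp M (vimage_algebra (space M) (X 0) borel) (Y 0) \<omega> = m (X 0 \<omega>)"
    and "C-lipschitz_on UNIV m"
    and "L \<ge> C * sqrt (real CARD('d))"
    and "mono N" and "\<forall>n. N n \<ge> 1" and "filterlim N at_top sequentially"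
  shows "(\<forall>x \<in> pos_set M (X 0). m_L M (X 0) (Y 0) L x = m x)
    \<and> (AE \<omega> in M. \<forall>x \<in> pos_set M (X 0). (\<lambda>n. m_hat X Y L (N n) n \<omega> x) \<longlonglongrightarrow> m x)
    \<and> (bounded (pos_set M (X 0)) \<longrightarrow>
         (AE \<omega> in M. uniform_limit (pos_set M (X 0)) (\<lambda>n x. m_hat X Y L (N n) n \<omega> x) m sequentially))
    \<and> (((\<exists>D. AE \<omega> in M. \<bar>Y 0 \<omega>\<bar> \<le> D) \<or> (\<exists>r. AE \<omega> in M. norm (X 0 \<omega>) \<le> r)) \<longrightarrow>
         (AE \<omega> in M. (\<lambda>n. \<integral>\<^sup>+ x. ennreal ((m_hat X Y L (N n) n \<omega> x - m x)^2) \<partial>(distr M borel (X 0)))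
            \<longlonglongrightarrow> 0))"
proof -
  interpret stationary_regression M X Y m C L
    using assms(1-7) by (rule stationary_regression.intro[OF _ stationary_regression_axioms.intro])
  note N = assms(9,10)
  show ?thesis
    using m_L_eq AE_m_hat_tendsto[OF N] AE_uniform_limit_m_hat[OF N]
      AE_tendsto_nn_integral_sq_if_bounded_response[OF N] AE_tendsto_nn_integral_sq_if_bounded_support[OF N]
    by blast
qed

end
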